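(* For all $\lambda,\alpha,\beta>0$, $X\sim\mathrm{MLFD}(\lambda,\alpha,\beta)$ has increasing failure rate: the function $r(t)=P(X=t)/P(X\ge t)$ is nondecreasing in $t\in\{0,1,2,\dots\}$.
   Context: For $\alpha>0,\beta>0$ and $z\in\mathbb{C}$, the generalized Mittag-Leffler function is $E_{\alpha,\beta}(z)=\sum_{k=0}^\infty z^k/\Gamma(\alpha k+\beta)$. For $\lambda,\alpha,\beta>0$, the Mittag-Leffler function distribution $\mathrm{MLFD}(\lambda,\alpha,\beta)$ is the distribution on $\{0,1,2,\dots\}$ with $P(X=k)=\lambda^k/\{\Gamma(\alpha k+\beta)E_{\alpha,\beta}(\lambda)\}$. *)

theory Defs
  imports "HOL-Analysis.Analysis"
begin

definition mittag_leffler :: "real \<Rightarrow> real \<Rightarrow> 'a::Gamma \<Rightarrow> 'a" where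
  "mittag_leffler \<alpha> \<beta> z = (\<Sum>k. z ^ k / Gamma (of_real (\<alpha> * real k + \<beta>)))"

definition mlfd_pmf :: "real \<Rightarrow> real \<Rightarrow> real \<Rightarrow> nat \<Rightarrow> real" where
  "mlfd_pmf lam \<alpha> \<beta> k = lam ^ k / (Gamma (\<alpha> * real k + \<beta>) * mittag_leffler \<alpha> \<beta> lam)"

definition mlfd_survival :: "real \<Rightarrow> real \<Rightarrow> real \<Rightarrow> nat \<Rightarrow> real" where
  "mlfd_survival lam \<alpha> \<beta> t = (\<Sum>k. mlfd_pmf lam \<alpha> \<beta> (k + t))"

definition mlfd_failure_rate :: "real \<Rightarrow> real \<Rightarrow> real \<Rightarrow> nat \<Rightarrow> real" where
  "mlfd_failure_rate lam \<alpha> \<beta> t = mlfd_pmf lam \<alpha> \<beta> t / mlfd_survival lam \<alpha> \<beta> t"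

end

theory Submission
  imports Defs
begin

(* Write w k = lam^k / Gamma(alpha k + beta) for the unnormalised weights, so that
   P(X = k) = w k / E with E = E_{alpha,beta}(lam) = sum_k w k, and the failure rate
   is r t = w t / sum_{k>=0} w (k + t); the normalising constant cancels.

   1. Secant slopes of a convex function are monotone in both endpoints.  Applied to
      the log-convex Gamma function this gives that Gamma(x + h) / Gamma x is
      nondecreasing in x > 0, and the growth bound (x - 1)^h Gamma x <= Gamma(x + h).
   2. Hence the weight ratio w (n+1) / w n = lam Gamma x_n / Gamma (x_n + alpha),
      x_n = alpha n + beta, is nonincreasing in n and tends to 0; the latter gives
      summability of w by the ratio test.
   3. Discrete reliability fact: for a positive summable sequence with nonincreasing
      ratio a (n+1) / a n, the hazard a t / sum_k a (k + t) is nondecreasing, because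
      every tail term a (k + t) / a t is a product of k consecutive ratios.
   The theorem is criterion 3 applied to w, with the hypotheses supplied by step 2. *)

lemma convex_on_secant_slope_mono:
  fixes f :: "real \<Rightarrow> real"
  assumes f: "convex_on I f" and I: "a \<in> I" "d \<in> I"
    and "a < b" "c < d" "a \<le> c" "b \<le> d"
  shows "(f b - f a) / (b - a) \<le> (f d - f c) / (d - c)"
proof -
  have swap: "(f v - f u) / (v - u) = (f u - f v) / (u - v)" for u v
    by (metis minus_diff_eq minus_divide_divide)
  have left: "(f b - f a) / (b - a) \<le> (f d - f a) / (d - a)"
  proof (cases "b = d")
    case False
    then show ?thesis
      using convex_on_slope_le(1)[OF f I, of b] assms by (simp add: swap)
  qed simp
  have right: "(f d - f a) / (d - a) \<le> (f d - f c) / (d - c)"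
  proof (cases "a = c")
    case False
    then show ?thesis
      using convex_on_slope_le(2)[OF f I, of c] assms by (simp add: swap)
  qed simp
  from left right show ?thesis by linarith
qed

text \<open>Log-convexity of Gamma: the quotient Gamma(x + h) / Gamma x is nondecreasing in x > 0.\<close>

lemma Gamma_shift_quotient_mono:
  fixes x y h :: real
  assumes "0 < x" "x \<le> y" "0 < h"
  shows "Gamma (x + h) / Gamma x \<le> Gamma (y + h) / Gamma y"
proof -
  have "(ln (Gamma (x + h)) - ln (Gamma x)) / h \<le> (ln (Gamma (y + h)) - ln (Gamma y)) / h"
    using convex_on_secant_slope_mono[OF log_convex_Gamma_real, of x "y + h" "x + h" y] assms
    by simp
  then have "exp (ln (Gamma (x + h)) - ln (Gamma x)) \<le> exp (ln (Gamma (y + h)) - ln (Gamma y))"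
    using assms by (simp add: divide_le_cancel)
  then show ?thesis
    using assms by (simp add: exp_diff)
qed

text \<open>Log-convexity of Gamma also yields the growth bound (x - 1)^h Gamma x \<le> Gamma(x + h):
  the secant slope of ln Gamma over [x - 1, x] is ln (x - 1) by the functional equation.\<close>

lemma Gamma_shift_lower_bound:
  fixes x h :: real
  assumes "1 < x" "0 < h"
  shows "(x - 1) powr h * Gamma x \<le> Gamma (x + h)"
proof -
  have Gamma_x: "Gamma x = (x - 1) * Gamma (x - 1)"
    using Gamma_plus1[of "x - 1"] assms by (simp add: nonpos_Ints_def)
  have pos: "Gamma (x - 1) > 0" "Gamma x > 0" "Gamma (x + h) > 0"
    using assms by (auto intro!: Gamma_real_pos)
  have "ln (Gamma x) - ln (Gamma (x - 1)) \<le> (ln (Gamma (x + h)) - ln (Gamma x)) / h"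
    using convex_on_secant_slope_mono[OF log_convex_Gamma_real, of "x - 1" "x + h" x x] assms
    by simp
  moreover have "ln (Gamma x) - ln (Gamma (x - 1)) = ln (x - 1)"
    unfolding Gamma_x using ln_mult[of "x - 1" "Gamma (x - 1)"] pos(1) assms by simp
  ultimately have "h * ln (x - 1) \<le> ln (Gamma (x + h)) - ln (Gamma x)"
    using assms by (simp add: field_simps)
  then have "exp (h * ln (x - 1)) \<le> exp (ln (Gamma (x + h)) - ln (Gamma x))"
    by simp
  then have "exp (h * ln (x - 1)) \<le> Gamma (x + h) / Gamma x"
    using pos by (simp add: exp_diff)
  then show ?thesis
    using assms pos by (simp add: powr_def field_simps)
qed

text \<open>For a positive sequence whose successive ratios a (n + 1) / a n are nonincreasing,
  each normalised tail term a (k + t) / a t (a product of k consecutive ratios) is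
  nonincreasing in the starting point t.\<close>

lemma normalised_tail_term_antimono:
  fixes a :: "nat \<Rightarrow> real"
  assumes pos: "\<And>n. a n > 0" and ratio: "antimono (\<lambda>n. a (Suc n) / a n)"
  shows "a (k + Suc t) / a (Suc t) \<le> a (k + t) / a t"
proof (induction k)
  case 0
  then show ?case using pos[of t] pos[of "Suc t"] by simp
next
  case (Suc k)
  have step: "a (Suc m) / a n = a m / a n * (a (Suc m) / a m)" for m n
    using pos[of m] by simp
  have "a (Suc k + Suc t) / a (Suc t)
        = a (k + Suc t) / a (Suc t) * (a (Suc (k + Suc t)) / a (k + Suc t))"
    using step by simp
  also have "\<dots> \<le> a (k + t) / a t * (a (Suc (k + t)) / a (k + t))"
    using Suc.IH antimonoD[OF ratio, of "k + t" "k + Suc t"] pos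
    by (intro mult_mono) (auto intro: less_imp_le)
  also have "\<dots> = a (Suc k + t) / a t"
    using step by simp
  finally show ?case .
qed

lemma hazard_mono_of_ratio_antimono:
  fixes a :: "nat \<Rightarrow> real"
  assumes pos: "\<And>n. a n > 0" and summable: "summable a"
    and ratio: "antimono (\<lambda>n. a (Suc n) / a n)"
  shows "mono (\<lambda>t. a t / (\<Sum>k. a (k + t)))"
proof (rule incseq_SucI)
  fix t
  have tail_summable: "summable (\<lambda>k. a (k + s))" for s
    using summable by (simp add: summable_iff_shift)
  have tail_pos: "(\<Sum>k. a (k + s)) > 0" for s
    using tail_summable pos by (rule suminf_pos)
  have "(\<Sum>k. a (k + Suc t)) / a (Suc t) = (\<Sum>k. a (k + Suc t) / a (Suc t))"
    using suminf_divide[OF tail_summable, of "Suc t"] by simp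
  also have "\<dots> \<le> (\<Sum>k. a (k + t) / a t)"
    using normalised_tail_term_antimono[OF pos ratio]
    by (intro suminf_le summable_divide tail_summable)
  also have "\<dots> = (\<Sum>k. a (k + t)) / a t"
    using suminf_divide[OF tail_summable] by simp
  finally have "(\<Sum>k. a (k + Suc t)) / a (Suc t) \<le> (\<Sum>k. a (k + t)) / a t" .
  then show "a t / (\<Sum>k. a (k + t)) \<le> a (Suc t) / (\<Sum>k. a (k + Suc t))"
    using pos[of t] pos[of "Suc t"] tail_pos[of t] tail_pos[of "Suc t"]
    by (simp add: divide_simps mult.commute)
qed

lemma summable_of_ratio_tendsto_zero:
  fixes a :: "nat \<Rightarrow> real"
  assumes pos: "\<And>n. a n > 0" and lim: "(\<lambda>n. a (Suc n) / a n) \<longlonglongrightarrow> 0"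
  shows "summable a"
proof -
  obtain N where N: "\<And>n. n \<ge> N \<Longrightarrow> a (Suc n) / a n < 1 / 2"
    using order_tendstoD(2)[OF lim, of "1 / 2"] by (auto simp: eventually_sequentially)
  show ?thesis
  proof (rule summable_ratio_test[of "1 / 2" N])
    fix n assume "n \<ge> N"
    then show "norm (a (Suc n)) \<le> 1 / 2 * norm (a n)"
      using N[of n] pos[of n] pos[of "Suc n"] by (simp add: divide_simps)
  qed simp
qed

definition mlfd_weight :: "real \<Rightarrow> real \<Rightarrow> real \<Rightarrow> nat \<Rightarrow> real" where
  "mlfd_weight lam \<alpha> \<beta> k = lam ^ k / Gamma (\<alpha> * real k + \<beta>)"

context
  fixes lam \<alpha> \<beta> :: real
  assumes lam: "lam > 0" and \<alpha>: "\<alpha> > 0" and \<beta>: "\<beta> > 0"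
begin

lemma Gamma_argument_pos: "\<alpha> * real n + \<beta> > 0"
  using \<alpha> \<beta> by (simp add: add_nonneg_pos)

lemma mlfd_weight_pos: "mlfd_weight lam \<alpha> \<beta> k > 0"
  unfolding mlfd_weight_def using lam Gamma_argument_pos by simp

lemma mlfd_weight_ratio:
  "mlfd_weight lam \<alpha> \<beta> (Suc n) / mlfd_weight lam \<alpha> \<beta> n
     = lam * (Gamma (\<alpha> * real n + \<beta>) / Gamma (\<alpha> * real n + \<beta> + \<alpha>))"
  using Gamma_argument_pos[of n] lam by (simp add: mlfd_weight_def field_simps)

lemma mlfd_weight_ratio_antimono: "antimono (\<lambda>n. mlfd_weight lam \<alpha> \<beta> (Suc n) / mlfd_weight lam \<alpha> \<beta> n)"
proof (rule antimonoI)
  fix m n :: nat assume "m \<le> n"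
  then have "\<alpha> * real m + \<beta> \<le> \<alpha> * real n + \<beta>"
    using \<alpha> by simp
  then have "Gamma (\<alpha> * real m + \<beta> + \<alpha>) / Gamma (\<alpha> * real m + \<beta>)
             \<le> Gamma (\<alpha> * real n + \<beta> + \<alpha>) / Gamma (\<alpha> * real n + \<beta>)"
    using Gamma_shift_quotient_mono Gamma_argument_pos \<alpha> by blast
  then have "Gamma (\<alpha> * real n + \<beta>) / Gamma (\<alpha> * real n + \<beta> + \<alpha>)
             \<le> Gamma (\<alpha> * real m + \<beta>) / Gamma (\<alpha> * real m + \<beta> + \<alpha>)"
    using Gamma_argument_pos[of m] Gamma_argument_pos[of n] \<alpha>
    by (simp add: divide_simps mult.commute add_pos_pos)
  then show "mlfd_weight lam \<alpha> \<beta> (Suc n) / mlfd_weight lam \<alpha> \<beta> n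
             \<le> mlfd_weight lam \<alpha> \<beta> (Suc m) / mlfd_weight lam \<alpha> \<beta> m"
    unfolding mlfd_weight_ratio using lam by (intro mult_left_mono) auto
qed

text \<open>The weight ratio tends to 0, being squeezed by lam / (alpha n + beta - 1)^alpha.\<close>

lemma mlfd_weight_ratio_tendsto_zero:
  "(\<lambda>n. mlfd_weight lam \<alpha> \<beta> (Suc n) / mlfd_weight lam \<alpha> \<beta> n) \<longlonglongrightarrow> 0"
proof -
  define x where "x n = \<alpha> * real n + \<beta>" for n
  have x_at_top: "filterlim (\<lambda>n. x n - 1) at_top sequentially"
    unfolding x_def
    using filterlim_tendsto_add_at_top[OF tendsto_const
            filterlim_tendsto_pos_mult_at_top[OF tendsto_const \<alpha> filterlim_real_sequentially],
          of "\<beta> - 1"]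
    by (simp add: algebra_simps)
  have bound_tendsto: "(\<lambda>n. lam * (x n - 1) powr (- \<alpha>)) \<longlonglongrightarrow> 0"
    using tendsto_mult_right_zero[OF tendsto_neg_powr[OF _ x_at_top]] \<alpha> by simp
  have "eventually (\<lambda>n. x n > 1) sequentially"
    using filterlim_at_top_dense[THEN iffD1, OF x_at_top, rule_format, of 0]
    by (auto elim: eventually_mono)
  then have bound: "eventually (\<lambda>n. mlfd_weight lam \<alpha> \<beta> (Suc n) / mlfd_weight lam \<alpha> \<beta> n
                         \<le> lam * (x n - 1) powr (- \<alpha>)) sequentially"
  proof (rule eventually_mono)
    fix n assume "x n > 1"
    then have "(x n - 1) powr \<alpha> * Gamma (x n) \<le> Gamma (x n + \<alpha>)"
      by (rule Gamma_shift_lower_bound[OF _ \<alpha>])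
    then have "Gamma (x n) / Gamma (x n + \<alpha>) \<le> (x n - 1) powr (- \<alpha>)"
      using \<open>x n > 1\<close> \<alpha> by (simp add: powr_minus divide_simps mult.commute add_pos_pos)
    then show "mlfd_weight lam \<alpha> \<beta> (Suc n) / mlfd_weight lam \<alpha> \<beta> n \<le> lam * (x n - 1) powr (- \<alpha>)"
      unfolding mlfd_weight_ratio x_def[symmetric] using lam by (intro mult_left_mono) auto
  qed
  have "eventually (\<lambda>n. 0 \<le> mlfd_weight lam \<alpha> \<beta> (Suc n) / mlfd_weight lam \<alpha> \<beta> n) sequentially"
    using mlfd_weight_pos by (simp add: less_imp_le)
  from tendsto_sandwich[OF this bound tendsto_const bound_tendsto] show ?thesis .
qed

lemma summable_mlfd_weight: "summable (mlfd_weight lam \<alpha> \<beta>)"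
  using mlfd_weight_pos mlfd_weight_ratio_tendsto_zero by (rule summable_of_ratio_tendsto_zero)

lemma mlfd_failure_rate_eq:
  "mlfd_failure_rate lam \<alpha> \<beta> t = mlfd_weight lam \<alpha> \<beta> t / (\<Sum>k. mlfd_weight lam \<alpha> \<beta> (k + t))"
proof -
  define E where "E = (\<Sum>k. mlfd_weight lam \<alpha> \<beta> k)"
  have E_pos: "E > 0"
    unfolding E_def using summable_mlfd_weight mlfd_weight_pos by (rule suminf_pos)
  have pmf: "mlfd_pmf lam \<alpha> \<beta> k = mlfd_weight lam \<alpha> \<beta> k / E" for k
    by (simp add: mlfd_pmf_def mittag_leffler_def mlfd_weight_def E_def)
  have tail_summable: "summable (\<lambda>k. mlfd_weight lam \<alpha> \<beta> (k + t))"
    using summable_mlfd_weight by (simp add: summable_iff_shift)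
  have "mlfd_survival lam \<alpha> \<beta> t = (\<Sum>k. mlfd_weight lam \<alpha> \<beta> (k + t)) / E"
    unfolding mlfd_survival_def pmf using suminf_divide[OF tail_summable] by simp
  then show ?thesis
    unfolding mlfd_failure_rate_def pmf using E_pos by simp
qed

end

theorem mainTheorem8:
  fixes lam \<alpha> \<beta> :: real
  assumes "lam > 0" and "\<alpha> > 0" and "\<beta> > 0"
  shows "mono (mlfd_failure_rate lam \<alpha> \<beta>)"
proof -
  have "mlfd_failure_rate lam \<alpha> \<beta> = (\<lambda>t. mlfd_weight lam \<alpha> \<beta> t / (\<Sum>k. mlfd_weight lam \<alpha> \<beta> (k + t)))"
    using mlfd_failure_rate_eq[OF assms] by (rule ext)
  moreover have "mono (\<lambda>t. mlfd_weight lam \<alpha> \<beta> t / (\<Sum>k. mlfd_weight lam \<alpha> \<beta> (k + t)))"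
    using mlfd_weight_pos[OF assms] summable_mlfd_weight[OF assms]
      mlfd_weight_ratio_antimono[OF assms]
    by (rule hazard_mono_of_ratio_antimono)
  ultimately show ?thesis by simp
qed

end
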